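(* For every $\alpha$-formula $\alpha$ with components $\alpha_1,\alpha_2$, the formula $\alpha\leftrightarrow\alpha_1\wedge\alpha_2$ is valid (where, if $\alpha$ has only one component, $\alpha_1\wedge\alpha_2$ means $\alpha_1$), and for every $\beta$-formula $\beta$ with components $\beta_1,\beta_2$, the formula $\beta\leftrightarrow\beta_1\vee\beta_2$ is valid.
   Context: $\tau$PDL syntax: formulas $\varphi::=p\mid\neg\varphi\mid\forall A.\varphi\mid\mathsf C_\imath A$, programs $A::=a\mid\varphi\mid\varphi\Rightarrow\varphi\mid AA\mid A+A\mid A^*$ ($p$ atomic formula, $a$ atomic program, $\imath$ agent), interpreted in $\mathcal L$-models by the standard relational semantics of $\tau$PDL: $\forall A.\varphi$ is the box $[A]\varphi$, tests $\varphi$ denote $\{(w,w):w\models\varphi\}$, $\to_{AB}=\to_A\circ\to_B$, $\to_{A+B}=\to_A\cup\to_B$, $\to_{A^*}$ is the reflexive-transitive closure, $\to_{\varphi\Rightarrow\psi}=\bigcup\{\to_A: A\in\Sigma^+,\forall w\models\varphi\,\forall w'(w\to_Aw'\Rightarrow w'\models\psi)\}$ with $\Sigma^+$ the finite nonempty compositions of atomic programs, tests and $\varphi\Rightarrow\psi$ terms; capabilities: $w\models\mathsf C_\imath a$ iff $\to_a\subseteq\imath^M(w)$, $\mathsf C_\imath\varphi$ always true, $w\models\mathsf C_\imath(\varphi\Rightarrow\psi)$ iff $\to_{\varphi\Rightarrow\psi}\subseteq\imath^M(w)$, $\mathsf C_\imath(AB)$ true at $w$ iff $w\models\mathsf C_\imath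 A$ and every $A$-successor satisfies $\mathsf C_\imath B$, $[\![\mathsf C_\imath(A+B)]\!]=[\![\mathsf C_\imath A]\!]\cap[\![\mathsf C_\imath B]\!]$, $[\![\mathsf C_\imath A^*]\!]=\bigcup\{[\![\varphi]\!]:[\![\varphi]\!]\subseteq[\![\mathsf C_\imath A]\!]\cap[\![\forall A.\varphi]\!]\}$; and the normality condition $\imath^M(w)=\bigcup\{\to_{\varphi\Rightarrow\psi}:w\models\mathsf C_\imath(\varphi\Rightarrow\psi)\}\cup\bigcup\{\to_a:w\models\mathsf C_\imath a\}$. $\mathsf{tt}$ is a tautology, $\Omega:=\mathsf{tt}\Rightarrow\mathsf{tt}$; $\wedge,\vee$ are the usual abbreviations. $\alpha$-formulas and their components $(\alpha_1;\alpha_2)$: $\neg\neg\varphi:(\varphi)$; $\neg\forall\psi.\varphi:(\neg\varphi;\psi)$; $\forall AB.\varphi:(\forall A.\forall B.\varphi)$; $\neg\forall AB.\varphi:(\neg\forall A.\forall B.\varphi)$; $\forall(A+B).\varphi:(\forall A.\varphi;\forall B.\varphi)$; $\forall A^*.\varphi:(\varphi;\forall A.\forall A^*.\varphi)$; $\mathsf C_\imath(AB):(\mathsf C_\imath A;\forall A.\mathsf C_\imath B)$; $\mathsf C_\imath(A+B):(\mathsf C_\imath A;\mathsf C_\imath B)$; $\mathsf C_\imath(A^* ):(\forall A^*.\mathsf C_\imath A)$; $\neg\mathsf C_\imath(A^* ):(\neg\forall A^*.\mathsf C_\imath A)$. $\beta$-formulas and components $(\beta_1;\beta_2)$: $\forall\psi.\varphi:(\neg\psi;\varphi)$;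 $\forall(\varphi\Rightarrow\psi).\vartheta:(\varphi\wedge\forall\Omega^*.\forall\psi.\vartheta;\ \forall\Omega^*.\vartheta)$; $\neg\forall(\varphi\Rightarrow\psi).\vartheta:(\neg\forall(\neg\varphi).\forall\Omega.\vartheta;\ \neg\forall\Omega.\forall\psi.\vartheta)$; $\neg\forall(A+B).\varphi:(\neg\forall A.\varphi;\neg\forall B.\varphi)$; $\neg\forall A^*.\varphi:(\neg\varphi;\neg\forall A.\forall A^*.\varphi)$; $\neg\mathsf C_\imath(AB):(\neg\mathsf C_\imath A;\neg\forall A.\mathsf C_\imath B)$; $\neg\mathsf C_\imath(A+B):(\neg\mathsf C_\imath A;\neg\mathsf C_\imath B)$. A formula is valid if true at every state of every $\mathcal L$-model. *)

theory Defs
  imports Main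
begin

datatype ('p,'a,'i) form =
    Atom 'p
  | Neg "('p,'a,'i) form"
  | Box "('p,'a,'i) prog" "('p,'a,'i) form"
  | Cap 'i "('p,'a,'i) prog"
and ('p,'a,'i) prog =
    Atomic 'a
  | Test "('p,'a,'i) form"
  | PImp "('p,'a,'i) form" "('p,'a,'i) form"
  | Seq "('p,'a,'i) prog" "('p,'a,'i) prog"
  | Choice "('p,'a,'i) prog" "('p,'a,'i) prog"
  | Star "('p,'a,'i) prog"

definition Impl :: "('p,'a,'i) form \<Rightarrow> ('p,'a,'i) form \<Rightarrow> ('p,'a,'i) form" where
  "Impl \<phi> \<psi> = Box (Test \<phi>) \<psi>"

definition Conj :: "('p,'a,'i) form \<Rightarrow> ('p,'a,'i) form \<Rightarrow> ('p,'a,'i) form" where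
  "Conj \<phi> \<psi> = Neg (Box (Test \<phi>) (Neg \<psi>))"

definition Disj :: "('p,'a,'i) form \<Rightarrow> ('p,'a,'i) form \<Rightarrow> ('p,'a,'i) form" where
  "Disj \<phi> \<psi> = Box (Test (Neg \<phi>)) \<psi>"

definition Iff :: "('p,'a,'i) form \<Rightarrow> ('p,'a,'i) form \<Rightarrow> ('p,'a,'i) form" where
  "Iff \<phi> \<psi> = Conj (Impl \<phi> \<psi>) (Impl \<psi> \<phi>)"

definition tt :: "('p,'a,'i) form" where
  "tt = Impl (Atom undefined) (Atom undefined)"

definition Omega :: "('p,'a,'i) prog" where
  "Omega = PImp tt tt"

inductive_set sigma_plus :: "('p,'a,'i) prog set" where
  sp_atomic: "Atomic a \<in> sigma_plus"
| sp_test: "Test \<phi> \<in> sigma_plus"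
| sp_imp: "PImp \<phi> \<psi> \<in> sigma_plus"
| sp_seq: "A \<in> sigma_plus \<Longrightarrow> B \<in> sigma_plus \<Longrightarrow> Seq A B \<in> sigma_plus"

text \<open>Because the semantics of =>-terms and of
  C_i(A*) is impredicative, a model carries the truth sets of all formulas (tr) and the
  relations of all =>-terms (rimp); an L-model is one where these satisfy the semantic clauses
  and the normality condition.\<close>

record ('s,'p,'a,'i) model =
  val  :: "'p \<Rightarrow> 's set"
  ra   :: "'a \<Rightarrow> ('s \<times> 's) set"
  cap  :: "'i \<Rightarrow> 's \<Rightarrow> ('s \<times> 's) set"
  tr   :: "('p,'a,'i) form \<Rightarrow> 's set"
  rimp :: "('p,'a,'i) form \<Rightarrow> ('p,'a,'i) form \<Rightarrow> ('s \<times> 's) set"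

primrec rel :: "('s,'p,'a,'i) model \<Rightarrow> ('p,'a,'i) prog \<Rightarrow> ('s \<times> 's) set" where
  "rel M (Atomic a) = ra M a"
| "rel M (Test \<phi>) = {(w, w) | w. w \<in> tr M \<phi>}"
| "rel M (PImp \<phi> \<psi>) = rimp M \<phi> \<psi>"
| "rel M (Seq A B) = rel M A O rel M B"
| "rel M (Choice A B) = rel M A \<union> rel M B"
| "rel M (Star A) = (rel M A)\<^sup>*"

primrec capsem :: "('s,'p,'a,'i) model \<Rightarrow> 'i \<Rightarrow> ('p,'a,'i) prog \<Rightarrow> 's set" where
  "capsem M i (Atomic a) = {w. ra M a \<subseteq> cap M i w}"
| "capsem M i (Test \<phi>) = UNIV"
| "capsem M i (PImp \<phi> \<psi>) = {w. rimp M \<phi> \<psi> \<subseteq> cap M i w}"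
| "capsem M i (Seq A B) =
     {w. w \<in> capsem M i A \<and> (\<forall>v. (w, v) \<in> rel M A \<longrightarrow> v \<in> capsem M i B)}"
| "capsem M i (Choice A B) = capsem M i A \<inter> capsem M i B"
| "capsem M i (Star A) =
     \<Union>{tr M \<phi> | \<phi>. tr M \<phi> \<subseteq> capsem M i A \<inter> tr M (Box A \<phi>)}"

definition safe :: "('s,'p,'a,'i) model \<Rightarrow> ('p,'a,'i) form \<Rightarrow> ('p,'a,'i) form \<Rightarrow> ('p,'a,'i) prog \<Rightarrow> bool" where
  "safe M \<phi> \<psi> A \<longleftrightarrow> (\<forall>w \<in> tr M \<phi>. \<forall>v. (w, v) \<in> rel M A \<longrightarrow> v \<in> tr M \<psi>)"

definition Lmodel :: "('s,'p,'a,'i) model \<Rightarrow> bool" where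
  "Lmodel M \<longleftrightarrow>
     (\<forall>p. tr M (Atom p) = val M p) \<and>
     (\<forall>\<phi>. tr M (Neg \<phi>) = - tr M \<phi>) \<and>
     (\<forall>A \<phi>. tr M (Box A \<phi>) = {w. \<forall>v. (w, v) \<in> rel M A \<longrightarrow> v \<in> tr M \<phi>}) \<and>
     (\<forall>i A. tr M (Cap i A) = capsem M i A) \<and>
     (\<forall>\<phi> \<psi>. rimp M \<phi> \<psi> = \<Union>{rel M A | A. A \<in> sigma_plus \<and> safe M \<phi> \<psi> A}) \<and>
     (\<forall>i w. cap M i w =
        \<Union>{rimp M \<phi> \<psi> | \<phi> \<psi>. w \<in> tr M (Cap i (PImp \<phi> \<psi>))} \<union>
        \<Union>{ra M a | a. w \<in> tr M (Cap i (Atomic a))})"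

definition valid :: "'s itself \<Rightarrow> ('p,'a,'i) form \<Rightarrow> bool" where
  "valid (_ :: 's itself) \<phi> \<longleftrightarrow>
     (\<forall>M :: ('s,'p,'a,'i) model. Lmodel M \<longrightarrow> (\<forall>w. w \<in> tr M \<phi>))"

inductive alpha1 :: "('p,'a,'i) form \<Rightarrow> ('p,'a,'i) form \<Rightarrow> bool" where
  "alpha1 (Neg (Neg \<phi>)) \<phi>"
| "alpha1 (Box (Seq A B) \<phi>) (Box A (Box B \<phi>))"
| "alpha1 (Neg (Box (Seq A B) \<phi>)) (Neg (Box A (Box B \<phi>)))"
| "alpha1 (Cap i (Star A)) (Box (Star A) (Cap i A))"
| "alpha1 (Neg (Cap i (Star A))) (Neg (Box (Star A) (Cap i A)))"

inductive alpha2 :: "('p,'a,'i) form \<Rightarrow> ('p,'a,'i) form \<Rightarrow> ('p,'a,'i) form \<Rightarrow> bool" where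
  "alpha2 (Neg (Box (Test \<psi>) \<phi>)) (Neg \<phi>) \<psi>"
| "alpha2 (Box (Choice A B) \<phi>) (Box A \<phi>) (Box B \<phi>)"
| "alpha2 (Box (Star A) \<phi>) \<phi> (Box A (Box (Star A) \<phi>))"
| "alpha2 (Cap i (Seq A B)) (Cap i A) (Box A (Cap i B))"
| "alpha2 (Cap i (Choice A B)) (Cap i A) (Cap i B)"

inductive beta :: "('p,'a,'i) form \<Rightarrow> ('p,'a,'i) form \<Rightarrow> ('p,'a,'i) form \<Rightarrow> bool" where
  "beta (Box (Test \<psi>) \<phi>) (Neg \<psi>) \<phi>"
| "beta (Box (PImp \<phi> \<psi>) \<theta>)
        (Conj \<phi> (Box (Star Omega) (Box (Test \<psi>) \<theta>))) (Box (Star Omega) \<theta>)"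
| "beta (Neg (Box (PImp \<phi> \<psi>) \<theta>))
        (Neg (Box (Test (Neg \<phi>)) (Box Omega \<theta>))) (Neg (Box Omega (Box (Test \<psi>) \<theta>)))"
| "beta (Neg (Box (Choice A B) \<phi>)) (Neg (Box A \<phi>)) (Neg (Box B \<phi>))"
| "beta (Neg (Box (Star A) \<phi>)) (Neg \<phi>) (Neg (Box A (Box (Star A) \<phi>)))"
| "beta (Neg (Cap i (Seq A B))) (Neg (Cap i A)) (Neg (Box A (Cap i B)))"
| "beta (Neg (Cap i (Choice A B))) (Neg (Cap i A)) (Neg (Cap i B))"

end

theory Submission
  imports Defs
begin

text \<open>Every clause reduces to an identity between truth sets in an arbitrary L-model; most are
  immediate from the semantic clauses. Three facts carry the content. First, \<open>\<Sigma>\<^sup>+\<close> contains the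
  tests and is closed under composition, so the relation of \<open>\<Omega>\<close> (the union of all
  \<open>\<Sigma>\<^sup>+\<close>-relations) is reflexive and transitive and \<open>\<Omega>\<^sup>*\<close> coincides with \<open>\<Omega>\<close>. Second, composing an
  \<open>\<Omega>\<close>-step with the test \<open>\<psi>\<close> or prefixing it with the test \<open>\<not>\<phi>\<close> makes it safe for \<open>\<phi> \<Rightarrow> \<psi>\<close>, so
  \<open>\<phi> \<Rightarrow> \<psi>\<close> relates exactly the \<open>\<Omega>\<close>-pairs whose target satisfies \<open>\<psi>\<close> whenever their source
  satisfies \<open>\<phi>\<close>. Third, \<open>C\<^sub>i A\<^sup>*\<close> is the largest truth set contained in \<open>C\<^sub>i A \<and> \<forall>A.(-)\<close>, and
  \<open>\<forall>A\<^sup>*. C\<^sub>i A\<close> is such a set containing every other one.\<close>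

locale L_model =
  fixes M :: "('s,'p,'a,'i) model"
  assumes Lmodel: "Lmodel M"
begin

lemma tr_Neg [simp]: "tr M (Neg \<phi>) = - tr M \<phi>"
  using Lmodel unfolding Lmodel_def by (elim conjE allE)

lemma tr_Box [simp]: "tr M (Box A \<phi>) = {w. \<forall>v. (w, v) \<in> rel M A \<longrightarrow> v \<in> tr M \<phi>}"
  using Lmodel unfolding Lmodel_def by (elim conjE allE)

lemma tr_Cap [simp]: "tr M (Cap i A) = capsem M i A"
  using Lmodel unfolding Lmodel_def by (elim conjE allE)

lemma rimp_eq_safe: "rimp M \<phi> \<psi> = \<Union>{rel M A | A. A \<in> sigma_plus \<and> safe M \<phi> \<psi> A}"
  using Lmodel unfolding Lmodel_def by (elim conjE allE)

lemma tr_Conj [simp]: "tr M (Conj \<phi> \<psi>) = tr M \<phi> \<inter> tr M \<psi>"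
  by (auto simp: Conj_def)

lemma tr_Disj [simp]: "tr M (Disj \<phi> \<psi>) = tr M \<phi> \<union> tr M \<psi>"
  by (auto simp: Disj_def)

lemma tr_tt [simp]: "tr M tt = UNIV"
  by (auto simp: tt_def Impl_def)

lemma rel_Omega: "rel M Omega = (\<Union>A \<in> sigma_plus. rel M A)"
  by (auto simp: Omega_def rimp_eq_safe safe_def)

lemma refl_rel_Omega: "(w, w) \<in> rel M Omega"
  unfolding rel_Omega by (auto intro!: bexI[of _ "Test tt"] sigma_plus.sp_test)

lemma trans_rel_Omega: "trans (rel M Omega)"
proof (rule transI)
  fix x y z
  assume "(x, y) \<in> rel M Omega" "(y, z) \<in> rel M Omega"
  then obtain A B where "A \<in> sigma_plus" "B \<in> sigma_plus" "(x, y) \<in> rel M A" "(y, z) \<in> rel M B"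
    by (auto simp: rel_Omega)
  then show "(x, z) \<in> rel M Omega"
    unfolding rel_Omega by (auto intro!: bexI[of _ "Seq A B"] sigma_plus.sp_seq)
qed

lemma rtrancl_rel_Omega [simp]: "(rel M Omega)\<^sup>* = rel M Omega"
  using refl_rel_Omega trans_rel_Omega by (auto simp: rtrancl_trancl_reflcl)

lemma rimp_eq: "rimp M \<phi> \<psi> = {(w, v) \<in> rel M Omega. w \<in> tr M \<phi> \<longrightarrow> v \<in> tr M \<psi>}"
proof (intro equalityI subsetI)
  fix p
  assume "p \<in> rimp M \<phi> \<psi>"
  then show "p \<in> {(w, v) \<in> rel M Omega. w \<in> tr M \<phi> \<longrightarrow> v \<in> tr M \<psi>}"
    unfolding rimp_eq_safe rel_Omega safe_def by blast
next
  fix p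
  assume "p \<in> {(w, v) \<in> rel M Omega. w \<in> tr M \<phi> \<longrightarrow> v \<in> tr M \<psi>}"
  then obtain w v B where p: "p = (w, v)" and B: "B \<in> sigma_plus" "(w, v) \<in> rel M B"
    and safe_pair: "w \<in> tr M \<phi> \<longrightarrow> v \<in> tr M \<psi>"
    by (auto simp: rel_Omega)
  obtain C where "C \<in> sigma_plus" "safe M \<phi> \<psi> C" "(w, v) \<in> rel M C"
  proof (cases "w \<in> tr M \<phi>")
    case True
    with B safe_pair show ?thesis
      by (intro that[of "Seq B (Test \<psi>)"]) (auto simp: safe_def intro: sigma_plus.intros)
  next
    case False
    with B show ?thesis
      by (intro that[of "Seq (Test (Neg \<phi>)) B"]) (auto simp: safe_def intro: sigma_plus.intros)
  qed
  then show "p \<in> rimp M \<phi> \<psi>"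
    unfolding p rimp_eq_safe by blast
qed

lemma tr_Cap_Star: "tr M (Cap i (Star A)) = tr M (Box (Star A) (Cap i A))"
  unfolding tr_Cap
proof
  show "capsem M i (Star A) \<subseteq> tr M (Box (Star A) (Cap i A))"
  proof
    fix w
    assume "w \<in> capsem M i (Star A)"
    then obtain \<phi> where w: "w \<in> tr M \<phi>" and inv: "tr M \<phi> \<subseteq> capsem M i A \<inter> tr M (Box A \<phi>)"
      by auto
    have "v \<in> tr M \<phi>" if "(w, v) \<in> (rel M A)\<^sup>*" for v
      using that by (induction rule: rtrancl_induct) (use w inv in auto)
    with inv show "w \<in> tr M (Box (Star A) (Cap i A))"
      by auto
  qed
next
  have "tr M (Box (Star A) (Cap i A)) \<subseteq> capsem M i A \<inter> tr M (Box A (Box (Star A) (Cap i A)))"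
    by (auto intro: converse_rtrancl_into_rtrancl)
  then show "tr M (Box (Star A) (Cap i A)) \<subseteq> capsem M i (Star A)"
    by (simp only: capsem.simps) blast
qed

lemma tr_Box_PImp:
  "tr M (Box (PImp \<phi> \<psi>) \<theta>) =
     (tr M \<phi> \<inter> tr M (Box Omega (Box (Test \<psi>) \<theta>))) \<union> tr M (Box Omega \<theta>)"
  unfolding tr_Box rel.simps rimp_eq by auto

lemma alpha1_tr_eq: "alpha1 \<alpha> \<alpha>\<^sub>1 \<Longrightarrow> tr M \<alpha> = tr M \<alpha>\<^sub>1"
  by (induction rule: alpha1.induct) (simp_all only: tr_Neg tr_Cap_Star, auto)

lemma alpha2_tr_eq: "alpha2 \<alpha> \<alpha>\<^sub>1 \<alpha>\<^sub>2 \<Longrightarrow> tr M \<alpha> = tr M \<alpha>\<^sub>1 \<inter> tr M \<alpha>\<^sub>2"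
  by (induction rule: alpha2.induct)
    (auto intro: converse_rtrancl_into_rtrancl elim: converse_rtranclE)

lemma beta_tr_eq: "beta \<beta> \<beta>\<^sub>1 \<beta>\<^sub>2 \<Longrightarrow> tr M \<beta> = tr M \<beta>\<^sub>1 \<union> tr M \<beta>\<^sub>2"
  by (induction rule: beta.induct)
    (simp_all only: tr_Neg tr_Box_PImp, auto intro: converse_rtrancl_into_rtrancl elim: converse_rtranclE)

end

lemma valid_IffI:
  assumes "\<And>M :: ('s,'p,'a,'i) model. L_model M \<Longrightarrow> tr M \<phi> = tr M \<psi>"
  shows "valid TYPE('s) (Iff \<phi> \<psi>)"
proof (unfold valid_def, intro allI impI)
  fix M :: "('s,'p,'a,'i) model" and w
  assume "Lmodel M"
  then interpret L_model M by unfold_locales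
  show "w \<in> tr M (Iff \<phi> \<psi>)"
    using assms[OF L_model_axioms] by (simp add: Iff_def Impl_def)
qed

theorem mainTheorem6:
  fixes \<alpha> \<alpha>\<^sub>1 \<alpha>\<^sub>2 \<beta> \<beta>\<^sub>1 \<beta>\<^sub>2 :: "('p,'a,'i) form"
  shows "(alpha1 \<alpha> \<alpha>\<^sub>1 \<longrightarrow> valid TYPE('s) (Iff \<alpha> \<alpha>\<^sub>1))
       \<and> (alpha2 \<alpha> \<alpha>\<^sub>1 \<alpha>\<^sub>2 \<longrightarrow> valid TYPE('s) (Iff \<alpha> (Conj \<alpha>\<^sub>1 \<alpha>\<^sub>2)))
       \<and> (beta \<beta> \<beta>\<^sub>1 \<beta>\<^sub>2 \<longrightarrow> valid TYPE('s) (Iff \<beta> (Disj \<beta>\<^sub>1 \<beta>\<^sub>2)))"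
  by (intro conjI impI valid_IffI)
    (simp_all add: L_model.alpha1_tr_eq L_model.alpha2_tr_eq L_model.beta_tr_eq
      L_model.tr_Conj L_model.tr_Disj)

end
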